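(* Let $T>0$, $r>0$, $\sigma>0$, $q_S,\gamma_S\in\mathbb{R}$, $\lambda_B,\lambda_C\ge0$, $R_B,R_C\in[0,1]$ and $s_F\ge 0$. Let $H:(0,\infty)\to[0,\infty)$ be a non-negative, locally bounded payoff function with at most linear growth at infinity, and let $V$ be the risk-free Black-Scholes price, i.e. the solution of $$\frac{\partial V}{\partial t}+\mathcal{A}V-rV=0 \text{ in } (0,T)\times(0,\infty),\qquad V(T,S)=H(S),$$ where $\mathcal{A}=\frac12\sigma^2S^2\frac{\partial^2}{\partial S^2}+(q_S-\gamma_S)S\frac{\partial}{\partial S}$. Consider the semilinear final value problem $$\frac{\partial U}{\partial t}+\mathcal{A}U-rU=-(1-R_B)\lambda_BU^-+(1-R_C)\lambda_CU^++s_FU^+ \text{ in }(0,T)\times(0,\infty),\qquad U(T,S)=H(S),$$ where $\varphi^+=\max(\varphi,0)$ and $\varphi^-=\max(-\varphi,0)$, whose solution is the limit of the monotone iteration scheme with sub- and supersolutions. Then this solution $U$ is non-negative and is given by $$U(t,S)=\mathrm{e}^{-((1-R_C)\lambda_C+s_F)(T-t)}\,V(t,S).$$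
   Context: Here $V$ is the classical risk-free price (e.g. $V(t,S)=\mathrm{e}^{-r(T-t)}\int_{\mathbb{R}}H\big(S\mathrm{e}^{(q_S-\gamma_S-\sigma^2/2)(T-t)+\sigma\sqrt{T-t}\,z}\big)\frac{\mathrm{e}^{-z^2/2}}{\sqrt{2\pi}}\,\mathrm{d}z$). The parameters $\lambda_B,\lambda_C$ are default intensities, $R_B,R_C$ recovery rates, $s_F$ a funding spread; this PDE models the adjusted price when the mark-to-market value at default is the adjusted price $U$ itself. In time-to-maturity $\tau=T-t$ and $x=\ln S$, with $u(\tau,x)=U(t,S)$, the problem is equivalent to $u_\tau-\frac12\sigma^2u_{xx}-\rho u_x+(r+c_M)u=g(u)$, $u(0,x)=H(\mathrm{e}^x)$, with $\rho=q_S-\gamma_S-\frac12\sigma^2$, $g(u)=(1-R_B)\lambda_Bu^--(1-R_C)\lambda_Cu^+-s_Fu^++c_Mu$ and $c_M\ge\max\{(1-R_B)\lambda_B,(1-R_C)\lambda_C+s_F\}$, so that $g$ is nondecreasing; the solution is the common limit of the increasing sequence of subsolutions and decreasing sequence of supersolutions obtained by solving $\partial_\tau u_{n+1}-\frac12\sigma^2\partial_x^2u_{n+1}-\rho\partial_xu_{n+1}+(r+c_M)u_{n+1}=g(u_n)$, $u_{n+1}(0,x)=H(\mathrm{e}^x)$. *)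

theory Defs
  imports "HOL-Analysis.Analysis"
begin

definition std_normal_density :: "real \<Rightarrow> real" where
  "std_normal_density z = exp (- (z^2) / 2) / sqrt (2 * pi)"

definition bs_price ::
  "real \<Rightarrow> real \<Rightarrow> real \<Rightarrow> real \<Rightarrow> real \<Rightarrow> (real \<Rightarrow> real) \<Rightarrow> real \<Rightarrow> real \<Rightarrow> real" where
  "bs_price T r \<sigma> qS \<gamma>S H t S =
     exp (- r * (T - t)) *
     (LINT z|lborel. H (S * exp ((qS - \<gamma>S - \<sigma>^2/2) * (T - t) + \<sigma> * sqrt (T - t) * z))
                      * std_normal_density z)"

text \<open>Transition operator of the linear part in log-variables (time to maturity tau, x = ln S):
  solution operator of  u_tau = (1/2) sigma^2 u_xx + rho u_x.\<close>
definition heat_op :: "real \<Rightarrow> real \<Rightarrow> real \<Rightarrow> (real \<Rightarrow> real) \<Rightarrow> real \<Rightarrow> real" where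
  "heat_op \<sigma> \<rho> \<tau> f x =
     (LINT z|lborel. f (x + \<rho> * \<tau> + \<sigma> * sqrt \<tau> * z) * std_normal_density z)"

definition xva_g :: "real \<Rightarrow> real \<Rightarrow> real \<Rightarrow> real \<Rightarrow> real \<Rightarrow> real \<Rightarrow> real \<Rightarrow> real" where
  "xva_g RB lamB RC lamC sF cM u =
     (1 - RB) * lamB * max (- u) 0 - (1 - RC) * lamC * max u 0 - sF * max u 0 + cM * u"

text \<open>Solution of  u_tau - (1/2)sigma^2 u_xx - rho u_x + (r+cM) u = G(u),  u(0,x) = h(x),
  on [0,T] in the Duhamel (variation of constants) sense -- each step of the monotone
  iteration solves the linear problem with source G(u_n), whose solution is given by this
  formula; the limit of the iteration is therefore a fixed point of this map.\<close>
definition mild_solution ::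
  "real \<Rightarrow> real \<Rightarrow> real \<Rightarrow> real \<Rightarrow> real \<Rightarrow> (real \<Rightarrow> real) \<Rightarrow> (real \<Rightarrow> real)
   \<Rightarrow> (real \<Rightarrow> real \<Rightarrow> real) \<Rightarrow> bool" where
  "mild_solution T r \<sigma> \<rho> cM G h u \<longleftrightarrow>
     (\<forall>\<tau>\<in>{0..T}. \<forall>x. u \<tau> x =
        exp (- (r + cM) * \<tau>) * heat_op \<sigma> \<rho> \<tau> h x
        + (LINT s:{0..\<tau>}|lborel.
             exp (- (r + cM) * (\<tau> - s)) * heat_op \<sigma> \<rho> (\<tau> - s) (\<lambda>y. G (u s y)) x))"

end

theory Submission
  imports Defs "HOL-Probability.Distributions"
begin

text \<open>On nonnegative arguments the nonlinearity is linear, g(v) = (c_M - k) v with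
  k = (1 - R_C) lambda_C + s_F. For the nonnegative payoff h, w(tau) = e^{-(r+k) tau} P_tau h is
  nonnegative (P the Gaussian transition semigroup of the linear part), so by the semigroup law
  its Duhamel integrand is e^{-(r+c_M) tau} (P_tau h) (c_M - k) e^{(c_M - k) s}, which integrates
  exactly: w is a mild solution. Since g is c_M-Lipschitz, iterating the Duhamel estimate bounds
  the difference of two mild solutions of linear growth by M (K tau)^n / n! (1 + e^x) for every n.
  Hence u = w, and w is the Black--Scholes price discounted by e^{-k (T-t)}.\<close>

lemma std_normal_density_eq_normal_density:
  "Defs.std_normal_density = normal_density 0 1"
  by (simp add: fun_eq_iff Defs.std_normal_density_def normal_density_def)

lemma heat_op_normal_density:
  "heat_op \<sigma> \<rho> t f x = (LINT z|lborel. f (x + \<rho> * t + \<sigma> * sqrt t * z) * normal_density 0 1 z)"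
  by (simp add: heat_op_def std_normal_density_eq_normal_density)

lemma has_bochner_integral_exp_normal_density:
  "has_bochner_integral lborel (\<lambda>z. exp (s * z) * normal_density 0 1 z) (exp (s^2 / 2))"
proof -
  have "exp (s * z) * normal_density 0 1 z = exp (s^2 / 2) * normal_density s 1 z" for z
  proof -
    have "s * z - z^2 / 2 = s^2 / 2 - (z - s)^2 / 2"
      by (simp add: power2_eq_square field_simps)
    then show ?thesis
      by (simp add: normal_density_def exp_add[symmetric] exp_diff[symmetric] diff_divide_distrib)
  qed
  moreover have "has_bochner_integral lborel (\<lambda>z. exp (s^2 / 2) * normal_density s 1 z) (exp (s^2 / 2) * 1)"
    by (intro has_bochner_integral_mult_right) (simp add: has_bochner_integral_iff)
  ultimately show ?thesis
    by simp
qed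

lemma has_bochner_integral_linear_growth_normal_density:
  "has_bochner_integral lborel (\<lambda>z. (1 + exp (a + b * z)) * normal_density 0 1 z) (1 + exp (a + b^2 / 2))"
proof -
  have "has_bochner_integral lborel (\<lambda>z. normal_density 0 1 z + exp a * (exp (b * z) * normal_density 0 1 z))
      (1 + exp a * exp (b^2 / 2))"
    by (intro has_bochner_integral_add has_bochner_integral_mult_right has_bochner_integral_exp_normal_density)
       (simp add: has_bochner_integral_iff)
  then show ?thesis
    by (simp add: exp_add algebra_simps)
qed

lemma linear_growth_normal_density_dominated:
  assumes "\<And>y. \<bar>f y\<bar> \<le> K * (1 + exp y)"
  shows "\<bar>f (a + b * z) * normal_density 0 1 z\<bar> \<le> K * ((1 + exp (a + b * z)) * normal_density 0 1 z)"
  using mult_right_mono[OF assms[of "a + b * z"] normal_density_nonneg[of 0 1 z]]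
  by (simp add: abs_mult mult.assoc)

lemma abs_integral_le_integral:
  fixes f g :: "'a \<Rightarrow> real"
  assumes "integrable M g" and "\<And>x. x \<in> space M \<Longrightarrow> \<bar>f x\<bar> \<le> g x"
  shows "\<bar>integral\<^sup>L M f\<bar> \<le> integral\<^sup>L M g"
proof -
  have "integral\<^sup>L M (\<lambda>x. \<bar>f x\<bar>) \<le> integral\<^sup>L M g"
    using assms by (intro integral_mono') (auto intro: order_trans[OF abs_ge_zero])
  then show ?thesis
    using integral_abs_bound[of M f] by linarith
qed

lemma abs_heat_op_le:
  assumes "t \<ge> 0" and "\<And>y. \<bar>f y\<bar> \<le> K * (1 + exp y)"
  shows "\<bar>heat_op \<sigma> \<rho> t f x\<bar> \<le> K * (1 + exp (x + \<rho> * t + \<sigma>^2 * t / 2))"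
proof -
  let ?g = "\<lambda>z. K * ((1 + exp (x + \<rho> * t + \<sigma> * sqrt t * z)) * normal_density 0 1 z)"
  have "has_bochner_integral lborel ?g (K * (1 + exp (x + \<rho> * t + (\<sigma> * sqrt t)^2 / 2)))"
    by (intro has_bochner_integral_mult_right has_bochner_integral_linear_growth_normal_density)
  moreover have "(\<sigma> * sqrt t)^2 = \<sigma>^2 * t"
    using assms(1) by (simp add: power_mult_distrib)
  ultimately have g: "integrable lborel ?g" "integral\<^sup>L lborel ?g = K * (1 + exp (x + \<rho> * t + \<sigma>^2 * t / 2))"
    by (simp_all add: has_bochner_integral_iff)
  have "\<bar>heat_op \<sigma> \<rho> t f x\<bar> \<le> integral\<^sup>L lborel ?g"
    unfolding heat_op_normal_density
    by (rule abs_integral_le_integral[OF g(1) linear_growth_normal_density_dominated[OF assms(2)]])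
  then show ?thesis
    unfolding g(2) .
qed

lemma abs_heat_op_le_uniform:
  assumes "t \<in> {0..T}" and f: "\<And>y. \<bar>f y\<bar> \<le> K * (1 + exp y)"
  shows "\<bar>heat_op \<sigma> \<rho> t f x\<bar> \<le> K * exp (\<bar>\<rho>\<bar> * T + \<sigma>^2 * T / 2) * (1 + exp x)"
proof -
  have "K \<ge> 0"
    using f[of 0] by (smt (verit) exp_gt_zero zero_le_mult_iff)
  have "\<rho> * t \<le> \<bar>\<rho>\<bar> * T" "\<sigma>^2 * t / 2 \<le> \<sigma>^2 * T / 2"
    using assms(1) by (auto intro: order_trans[OF mult_right_mono mult_left_mono] divide_right_mono)
  then have "exp (x + \<rho> * t + \<sigma>^2 * t / 2) \<le> exp (\<bar>\<rho>\<bar> * T + \<sigma>^2 * T / 2) * exp x"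
    by (simp add: exp_add[symmetric])
  moreover have "1 \<le> exp (\<bar>\<rho>\<bar> * T + \<sigma>^2 * T / 2)"
    using assms(1) by simp
  ultimately have "1 + exp (x + \<rho> * t + \<sigma>^2 * t / 2) \<le> exp (\<bar>\<rho>\<bar> * T + \<sigma>^2 * T / 2) * (1 + exp x)"
    unfolding distrib_left mult_1_right by linarith
  then show ?thesis
    using order_trans[OF abs_heat_op_le[OF _ f] mult_left_mono] assms(1) \<open>K \<ge> 0\<close>
    by (simp add: mult.assoc)
qed

lemma integrable_heat_op_integrand:
  assumes [measurable]: "f \<in> borel_measurable borel" and f: "\<And>y. \<bar>f y\<bar> \<le> K * (1 + exp y)"
  shows "integrable lborel (\<lambda>z. f (a + b * z) * normal_density 0 1 z)"
proof (rule Bochner_Integration.integrable_bound)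
  show "integrable lborel (\<lambda>z. K * ((1 + exp (a + b * z)) * normal_density 0 1 z))"
    using has_bochner_integral_linear_growth_normal_density
    by (intro integrable_mult_right) (auto simp: has_bochner_integral_iff)
  show "AE z in lborel. norm (f (a + b * z) * normal_density 0 1 z)
      \<le> norm (K * ((1 + exp (a + b * z)) * normal_density 0 1 z))"
    using linear_growth_normal_density_dominated[OF f, of a b]
    by (intro AE_I2) (auto intro: order_trans[OF _ abs_ge_self])
qed measurable

lemma heat_op_zero: "heat_op \<sigma> \<rho> 0 f x = f x"
  by (simp add: heat_op_normal_density)

lemma heat_op_nonneg: "(\<And>y. f y \<ge> 0) \<Longrightarrow> heat_op \<sigma> \<rho> t f x \<ge> 0"
  unfolding heat_op_normal_density by (intro Bochner_Integration.integral_nonneg) simp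

lemma heat_op_cmult: "heat_op \<sigma> \<rho> t (\<lambda>y. c * f y) x = c * heat_op \<sigma> \<rho> t f x"
  by (simp add: heat_op_normal_density mult.assoc)

lemma heat_op_diff:
  assumes "f \<in> borel_measurable borel" "\<And>y. \<bar>f y\<bar> \<le> K * (1 + exp y)"
    and "g \<in> borel_measurable borel" "\<And>y. \<bar>g y\<bar> \<le> K' * (1 + exp y)"
  shows "heat_op \<sigma> \<rho> t (\<lambda>y. f y - g y) x = heat_op \<sigma> \<rho> t f x - heat_op \<sigma> \<rho> t g x"
  using integrable_heat_op_integrand[OF assms(1,2)] integrable_heat_op_integrand[OF assms(3,4)]
  by (simp add: heat_op_normal_density left_diff_distrib)

lemma borel_measurable_heat_op[measurable]:
  assumes [measurable]: "h \<in> borel_measurable borel"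
  shows "heat_op \<sigma> \<rho> t h \<in> borel_measurable borel"
  unfolding heat_op_normal_density by measurable

lemma ennreal_heat_op:
  assumes [measurable]: "h \<in> borel_measurable borel"
    and "\<And>y. h y \<ge> 0" and "\<And>y. \<bar>h y\<bar> \<le> K * (1 + exp y)"
  shows "ennreal (heat_op \<sigma> \<rho> t h x)
    = (\<integral>\<^sup>+z. ennreal (h (x + \<rho> * t + \<sigma> * sqrt t * z)) * ennreal (normal_density 0 1 z) \<partial>lborel)"
proof -
  have "ennreal (heat_op \<sigma> \<rho> t h x)
      = (\<integral>\<^sup>+z. ennreal (h (x + \<rho> * t + \<sigma> * sqrt t * z) * normal_density 0 1 z) \<partial>lborel)"
    unfolding heat_op_normal_density
    by (intro nn_integral_eq_integral[symmetric] integrable_heat_op_integrand[OF assms(1,3)] AE_I2)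
       (simp add: assms(2))
  then show ?thesis
    by (simp add: ennreal_mult assms(2))
qed

lemma nn_integral_normal_density_scale:
  assumes "s > 0" and [measurable]: "F \<in> borel_measurable borel"
  shows "(\<integral>\<^sup>+z. F (s * z) * ennreal (normal_density 0 1 z) \<partial>lborel)
    = (\<integral>\<^sup>+y. F y * ennreal (normal_density 0 s y) \<partial>lborel)"
proof -
  have scale: "s * normal_density 0 s (s * z) = normal_density 0 1 z" for z
  proof -
    have "sqrt (2 * pi * s\<^sup>2) = s * sqrt (2 * pi)"
      using assms(1) by (simp add: real_sqrt_mult mult.commute)
    then show ?thesis
      using assms(1) by (simp add: normal_density_def power_mult_distrib field_simps)
  qed
  have "(\<integral>\<^sup>+y. F y * ennreal (normal_density 0 s y) \<partial>lborel)
      = ennreal \<bar>s\<bar> * (\<integral>\<^sup>+z. F (0 + s * z) * ennreal (normal_density 0 s (0 + s * z)) \<partial>lborel)"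
    using assms(1) by (intro nn_integral_real_affine) auto
  also have "\<dots> = (\<integral>\<^sup>+z. F (s * z) * ennreal (s * normal_density 0 s (s * z)) \<partial>lborel)"
    using assms(1) by (simp add: nn_integral_cmult[symmetric] ennreal_mult mult.left_commute)
  finally show ?thesis
    by (simp add: scale)
qed

lemma ennreal_heat_op_normal_density:
  assumes "\<sigma> > 0" "t > 0" and [measurable]: "h \<in> borel_measurable borel"
    and "\<And>y. h y \<ge> 0" and "\<And>y. \<bar>h y\<bar> \<le> K * (1 + exp y)"
  shows "ennreal (heat_op \<sigma> \<rho> t h x)
    = (\<integral>\<^sup>+y. ennreal (h (x + \<rho> * t + y)) * ennreal (normal_density 0 (\<sigma> * sqrt t) y) \<partial>lborel)"
  using assms(1,2) nn_integral_normal_density_scale[of "\<sigma> * sqrt t" "\<lambda>y. ennreal (h (x + \<rho> * t + y))"]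
  by (simp add: ennreal_heat_op[OF assms(3-5)])

lemma nn_integral_normal_density_convolution:
  assumes "s1 > 0" "s2 > 0" and [measurable]: "F \<in> borel_measurable borel"
  shows "(\<integral>\<^sup>+y. (\<integral>\<^sup>+v. F (y + v) * ennreal (normal_density 0 s2 v) \<partial>lborel)
              * ennreal (normal_density 0 s1 y) \<partial>lborel)
    = (\<integral>\<^sup>+w. F w * ennreal (normal_density 0 (sqrt (s2\<^sup>2 + s1\<^sup>2)) w) \<partial>lborel)"
proof -
  have shift: "(\<integral>\<^sup>+v. F (y + v) * ennreal (normal_density 0 s2 v) \<partial>lborel)
      = (\<integral>\<^sup>+w. F w * ennreal (normal_density 0 s2 (w - y)) \<partial>lborel)" for y
    using nn_integral_real_affine[of "\<lambda>w. F w * ennreal (normal_density 0 s2 (w - y))" 1 y]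
    by simp
  have "(\<integral>\<^sup>+y. (\<integral>\<^sup>+v. F (y + v) * ennreal (normal_density 0 s2 v) \<partial>lborel)
              * ennreal (normal_density 0 s1 y) \<partial>lborel)
      = (\<integral>\<^sup>+y. (\<integral>\<^sup>+w. F w * ennreal (normal_density 0 s2 (w - y) * normal_density 0 s1 y) \<partial>lborel) \<partial>lborel)"
    unfolding shift by (subst nn_integral_multc[symmetric]) (auto simp: ennreal_mult mult.assoc)
  also have "\<dots> = (\<integral>\<^sup>+w. (\<integral>\<^sup>+y. F w * ennreal (normal_density 0 s2 (w - y) * normal_density 0 s1 y) \<partial>lborel) \<partial>lborel)"
    by (rule lborel_pair.Fubini'[symmetric]) measurable
  also have "\<dots> = (\<integral>\<^sup>+w. F w * (\<integral>\<^sup>+y. ennreal (normal_density 0 s2 (w - y) * normal_density 0 s1 y) \<partial>lborel) \<partial>lborel)"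
    by (subst nn_integral_cmult) auto
  also have "\<dots> = (\<integral>\<^sup>+w. F w * ennreal (normal_density 0 (sqrt (s2\<^sup>2 + s1\<^sup>2)) w) \<partial>lborel)"
    using conv_normal_density_zero_mean[OF assms(2,1)] by (simp add: fun_eq_iff)
  finally show ?thesis .
qed

lemma heat_op_semigroup:
  assumes "\<sigma> > 0" "a \<ge> 0" "b \<ge> 0" and [measurable]: "h \<in> borel_measurable borel"
    and h: "\<And>y. h y \<ge> 0" "\<And>y. \<bar>h y\<bar> \<le> K * (1 + exp y)"
  shows "heat_op \<sigma> \<rho> a (heat_op \<sigma> \<rho> b h) x = heat_op \<sigma> \<rho> (a + b) h x"
proof (cases "a = 0 \<or> b = 0")
  case True
  then show ?thesis
    by (auto simp: heat_op_zero[abs_def])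
next
  case False
  then have "a > 0" "b > 0"
    using assms(2,3) by auto
  define c where "c = x + \<rho> * (a + b)"
  have Pb: "\<And>y. heat_op \<sigma> \<rho> b h y \<ge> 0" "\<And>y. \<bar>heat_op \<sigma> \<rho> b h y\<bar> \<le> K * exp (\<bar>\<rho>\<bar> * b + \<sigma>^2 * b / 2) * (1 + exp y)"
    using h \<open>b > 0\<close> by (auto intro: heat_op_nonneg abs_heat_op_le_uniform)
  have "ennreal (heat_op \<sigma> \<rho> a (heat_op \<sigma> \<rho> b h) x)
      = (\<integral>\<^sup>+y. ennreal (heat_op \<sigma> \<rho> b h (x + \<rho> * a + y)) * ennreal (normal_density 0 (\<sigma> * sqrt a) y) \<partial>lborel)"
    using assms(1) \<open>a > 0\<close> by (rule ennreal_heat_op_normal_density) (use Pb in auto)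
  also have "\<dots> = (\<integral>\<^sup>+y. (\<integral>\<^sup>+v. ennreal (h (c + (y + v))) * ennreal (normal_density 0 (\<sigma> * sqrt b) v) \<partial>lborel)
      * ennreal (normal_density 0 (\<sigma> * sqrt a) y) \<partial>lborel)"
    unfolding ennreal_heat_op_normal_density[OF assms(1) \<open>b > 0\<close> assms(4) h] c_def
    by (simp add: algebra_simps)
  also have "\<dots> = (\<integral>\<^sup>+w. ennreal (h (c + w)) * ennreal (normal_density 0 (\<sigma> * sqrt (a + b)) w) \<partial>lborel)"
    using assms(1) \<open>a > 0\<close> \<open>b > 0\<close>
    by (subst nn_integral_normal_density_convolution)
       (auto simp: power_mult_distrib real_sqrt_mult distrib_left[symmetric] add.commute)
  also have "\<dots> = ennreal (heat_op \<sigma> \<rho> (a + b) h x)"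
    using \<open>a > 0\<close> \<open>b > 0\<close> by (simp add: ennreal_heat_op_normal_density[OF assms(1) _ assms(4) h] c_def)
  finally show ?thesis
    using Pb(1) h(1) by (simp add: heat_op_nonneg)
qed

lemma set_integral_FTC_atLeastAtMost:
  fixes f F :: "real \<Rightarrow> real"
  assumes "a \<le> b" and "\<And>s. a \<le> s \<Longrightarrow> s \<le> b \<Longrightarrow> (F has_real_derivative f s) (at s)"
    and "continuous_on {a..b} f"
  shows "(LINT s:{a..b}|lborel. f s) = F b - F a"
  unfolding set_lebesgue_integral_def
  using assms
  by (intro integral_FTC_atLeastAtMost)
     (auto simp: has_real_derivative_iff_has_vector_derivative[symmetric] intro: has_field_derivative_at_within)

lemma set_integral_power_div_fact:
  fixes K \<tau> :: real
  assumes "\<tau> \<ge> 0"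
  shows "(LINT s:{0..\<tau>}|lborel. (K * s) ^ n / fact n) = K ^ n * \<tau> ^ Suc n / fact (Suc n)"
proof -
  have "((\<lambda>s. K ^ n / fact (Suc n) * s ^ Suc n) has_real_derivative (K * s) ^ n / fact n) (at s)" for s
  proof -
    have "((\<lambda>s. K ^ n / fact (Suc n) * s ^ Suc n) has_real_derivative K ^ n / fact (Suc n) * (real (Suc n) * s ^ n)) (at s)"
      using DERIV_pow[of "Suc n" s UNIV] by (intro DERIV_cmult) simp
    moreover have "K ^ n / fact (Suc n) * (real (Suc n) * s ^ n) = (K * s) ^ n / fact n"
      by (simp add: power_mult_distrib)
    ultimately show ?thesis
      by simp
  qed
  then show ?thesis
    using assms by (subst set_integral_FTC_atLeastAtMost) (auto intro!: continuous_intros)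
qed

lemma xva_g_nonneg:
  assumes "v \<ge> 0"
  shows "xva_g RB lamB RC lamC sF cM v = (cM - ((1 - RC) * lamC + sF)) * v"
  using assms by (simp add: xva_g_def algebra_simps)

lemma xva_g_lipschitz:
  assumes "0 \<le> (1 - RB) * lamB" "(1 - RB) * lamB \<le> cM"
    and "0 \<le> (1 - RC) * lamC + sF" "(1 - RC) * lamC + sF \<le> cM"
  shows "cM-lipschitz_on UNIV (xva_g RB lamB RC lamC sF cM)"
proof (rule lipschitz_onI)
  define \<alpha> k where "\<alpha> = (1 - RB) * lamB" and "k = (1 - RC) * lamC + sF"
  have g: "xva_g RB lamB RC lamC sF cM v = (cM - \<alpha>) * min v 0 + (cM - k) * max v 0" for v
    by (auto simp: xva_g_def \<alpha>_def k_def min_def max_def algebra_simps)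
  fix a b :: real
  have "dist (xva_g RB lamB RC lamC sF cM a) (xva_g RB lamB RC lamC sF cM b)
      = \<bar>(cM - \<alpha>) * (min a 0 - min b 0) + (cM - k) * (max a 0 - max b 0)\<bar>"
    by (simp add: dist_real_def g algebra_simps)
  also have "\<dots> \<le> \<bar>(cM - \<alpha>) * (min a 0 - min b 0)\<bar> + \<bar>(cM - k) * (max a 0 - max b 0)\<bar>"
    by (rule abs_triangle_ineq)
  also have "\<dots> = (cM - \<alpha>) * \<bar>min a 0 - min b 0\<bar> + (cM - k) * \<bar>max a 0 - max b 0\<bar>"
    using assms by (simp add: \<alpha>_def k_def abs_mult)
  also have "\<dots> \<le> cM * \<bar>min a 0 - min b 0\<bar> + cM * \<bar>max a 0 - max b 0\<bar>"
    using assms by (intro add_mono mult_right_mono) (auto simp: \<alpha>_def k_def)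
  also have "\<dots> = cM * dist a b"
    by (auto simp: dist_real_def min_def max_def algebra_simps)
  finally show "dist (xva_g RB lamB RC lamC sF cM a) (xva_g RB lamB RC lamC sF cM b) \<le> cM * dist a b" .
  show "0 \<le> cM"
    using assms by linarith
qed

definition measurable_linear_growth :: "real \<Rightarrow> (real \<Rightarrow> real \<Rightarrow> real) \<Rightarrow> bool" where
  "measurable_linear_growth T u \<longleftrightarrow> (\<lambda>(s, y). u s y) \<in> borel_measurable borel \<and>
     (\<exists>C. \<forall>\<tau>\<in>{0..T}. \<forall>x. \<bar>u \<tau> x\<bar> \<le> C * (1 + exp x))"

lemma borel_measurable_uncurry_comp:
  fixes v :: "real \<Rightarrow> real \<Rightarrow> real"
  assumes "(\<lambda>(s, y). v s y) \<in> borel_measurable borel"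
    and "f \<in> borel_measurable M" and "g \<in> borel_measurable M"
  shows "(\<lambda>z. v (f z) (g z)) \<in> borel_measurable M"
proof -
  have "(\<lambda>z. (f z, g z)) \<in> M \<rightarrow>\<^sub>M (borel :: (real \<times> real) measure)"
    using measurable_Pair[OF assms(2,3)] by (simp add: borel_prod)
  from measurable_compose[OF this assms(1)] show ?thesis
    by simp
qed

lemma measurable_linear_growth_lipschitz_comp:
  assumes "measurable_linear_growth T u" and G: "L-lipschitz_on UNIV G" "G \<in> borel_measurable borel"
  shows "measurable_linear_growth T (\<lambda>s y. G (u s y))"
proof -
  obtain C where C: "\<And>\<tau> x. \<tau> \<in> {0..T} \<Longrightarrow> \<bar>u \<tau> x\<bar> \<le> C * (1 + exp x)"
    and [measurable (raw)]: "(\<lambda>(s, y). u s y) \<in> borel_measurable borel"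
    using assms(1) unfolding measurable_linear_growth_def by blast
  have "\<bar>G (u \<tau> x)\<bar> \<le> (\<bar>G 0\<bar> + L * C) * (1 + exp x)" if "\<tau> \<in> {0..T}" for \<tau> x
  proof -
    have "\<bar>G (u \<tau> x)\<bar> \<le> \<bar>G 0\<bar> + L * \<bar>u \<tau> x\<bar>"
      using lipschitz_onD[OF G(1), of "u \<tau> x" 0] by (simp add: dist_real_def)
    also have "\<dots> \<le> \<bar>G 0\<bar> * (1 + exp x) + L * (C * (1 + exp x))"
      using C[OF that] lipschitz_on_nonneg[OF G(1)]
      by (intro add_mono mult_left_mono) (auto simp: mult_le_cancel_left1 add_increasing2)
    finally show ?thesis
      by (simp add: algebra_simps)
  qed
  moreover have "(\<lambda>(s, y). G (u s y)) \<in> borel_measurable borel"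
    using measurable_compose[OF \<open>(\<lambda>(s, y). u s y) \<in> borel_measurable borel\<close> G(2)]
    by (simp add: case_prod_beta')
  ultimately show ?thesis
    unfolding measurable_linear_growth_def by blast
qed

lemma abs_duhamel_integrand_le:
  assumes "c \<ge> 0" "s \<in> {0..\<tau>}" "\<tau> \<le> T" and "\<And>y. \<bar>f y\<bar> \<le> K * (1 + exp y)"
  shows "\<bar>exp (- c * (\<tau> - s)) * heat_op \<sigma> \<rho> (\<tau> - s) f x\<bar>
    \<le> K * exp (\<bar>\<rho>\<bar> * T + \<sigma>^2 * T / 2) * (1 + exp x)"
proof -
  have "exp (- c * (\<tau> - s)) * \<bar>heat_op \<sigma> \<rho> (\<tau> - s) f x\<bar> \<le> \<bar>heat_op \<sigma> \<rho> (\<tau> - s) f x\<bar>"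
    using assms(1,2) by (intro mult_left_le_one_le) auto
  also have "\<dots> \<le> K * exp (\<bar>\<rho>\<bar> * T + \<sigma>^2 * T / 2) * (1 + exp x)"
    using assms(2,3) by (intro abs_heat_op_le_uniform[OF _ assms(4)]) auto
  finally show ?thesis
    by (simp add: abs_mult)
qed

lemma set_integrable_duhamel_integrand:
  assumes "measurable_linear_growth T f" "c \<ge> 0" "\<tau> \<le> T"
  shows "set_integrable lborel {0..\<tau>} (\<lambda>s. exp (- c * (\<tau> - s)) * heat_op \<sigma> \<rho> (\<tau> - s) (f s) x)"
proof -
  obtain K where K: "\<And>s y. s \<in> {0..T} \<Longrightarrow> \<bar>f s y\<bar> \<le> K * (1 + exp y)"
    and f: "(\<lambda>(s, y). f s y) \<in> borel_measurable borel"
    using assms(1) unfolding measurable_linear_growth_def by blast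
  note [measurable (raw)] = borel_measurable_uncurry_comp[OF f]
  show ?thesis
  proof (rule set_integrable_bound)
    show "set_integrable lborel {0..\<tau>} (\<lambda>s. K * exp (\<bar>\<rho>\<bar> * T + \<sigma>^2 * T / 2) * (1 + exp x))"
      by (intro borel_integrable_atLeastAtMost' continuous_on_const)
    show "set_borel_measurable lborel {0..\<tau>} (\<lambda>s. exp (- c * (\<tau> - s)) * heat_op \<sigma> \<rho> (\<tau> - s) (f s) x)"
      unfolding set_borel_measurable_def heat_op_normal_density by measurable
    show "AE s in lborel. s \<in> {0..\<tau>} \<longrightarrow> norm (exp (- c * (\<tau> - s)) * heat_op \<sigma> \<rho> (\<tau> - s) (f s) x)
        \<le> norm (K * exp (\<bar>\<rho>\<bar> * T + \<sigma>^2 * T / 2) * (1 + exp x))"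
      using abs_duhamel_integrand_le[OF assms(2) _ assms(3) K] assms(3)
      by (intro AE_I2 impI) (auto intro: order_trans[OF _ abs_ge_self])
  qed
qed

lemma abs_duhamel_le:
  assumes "c \<ge> 0" "\<tau> \<le> T"
    and f: "\<And>s y. s \<in> {0..\<tau>} \<Longrightarrow> \<bar>f s y\<bar> \<le> \<beta> s * (1 + exp y)"
    and "continuous_on {0..\<tau>} \<beta>"
  shows "\<bar>LINT s:{0..\<tau>}|lborel. exp (- c * (\<tau> - s)) * heat_op \<sigma> \<rho> (\<tau> - s) (f s) x\<bar>
    \<le> (LINT s:{0..\<tau>}|lborel. \<beta> s) * exp (\<bar>\<rho>\<bar> * T + \<sigma>^2 * T / 2) * (1 + exp x)"
proof -
  let ?C = "exp (\<bar>\<rho>\<bar> * T + \<sigma>^2 * T / 2) * (1 + exp x)"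
  have "\<bar>LINT s:{0..\<tau>}|lborel. exp (- c * (\<tau> - s)) * heat_op \<sigma> \<rho> (\<tau> - s) (f s) x\<bar>
      \<le> (LINT s:{0..\<tau>}|lborel. \<beta> s * ?C)"
    unfolding set_lebesgue_integral_def
  proof (rule abs_integral_le_integral)
    show "integrable lborel (\<lambda>s. indicator {0..\<tau>} s *\<^sub>R (\<beta> s * ?C))"
      using borel_integrable_atLeastAtMost'[of 0 \<tau> "\<lambda>s. \<beta> s * ?C"] assms(4)
      by (simp add: set_integrable_def continuous_on_mult_right)
    show "\<bar>indicator {0..\<tau>} s *\<^sub>R (exp (- c * (\<tau> - s)) * heat_op \<sigma> \<rho> (\<tau> - s) (f s) x)\<bar>
        \<le> indicator {0..\<tau>} s *\<^sub>R (\<beta> s * ?C)" for s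
      using abs_duhamel_integrand_le[OF assms(1) _ assms(2) f] by (auto simp: indicator_def mult.assoc)
  qed
  then show ?thesis
    by (simp add: mult.assoc)
qed

lemma mild_solution_diff:
  assumes u: "mild_solution T r \<sigma> \<rho> cM G h u" "measurable_linear_growth T u"
    and w: "mild_solution T r \<sigma> \<rho> cM G h w" "measurable_linear_growth T w"
    and G: "L-lipschitz_on UNIV G" "G \<in> borel_measurable borel"
    and "r + cM \<ge> 0" "\<tau> \<in> {0..T}"
  shows "u \<tau> x - w \<tau> x = (LINT s:{0..\<tau>}|lborel.
    exp (- (r + cM) * (\<tau> - s)) * heat_op \<sigma> \<rho> (\<tau> - s) (\<lambda>y. G (u s y) - G (w s y)) x)"
proof -
  let ?D = "\<lambda>v s. exp (- (r + cM) * (\<tau> - s)) * heat_op \<sigma> \<rho> (\<tau> - s) (\<lambda>y. G (v s y)) x"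
  have Gu: "measurable_linear_growth T (\<lambda>s y. G (u s y))"
    and Gw: "measurable_linear_growth T (\<lambda>s y. G (w s y))"
    using u(2) w(2) G by (auto intro: measurable_linear_growth_lipschitz_comp)
  obtain Ku Kw where
    Ku: "\<And>s y. s \<in> {0..T} \<Longrightarrow> \<bar>G (u s y)\<bar> \<le> Ku * (1 + exp y)" and
    Kw: "\<And>s y. s \<in> {0..T} \<Longrightarrow> \<bar>G (w s y)\<bar> \<le> Kw * (1 + exp y)" and
    Gu_meas: "(\<lambda>(s, y). G (u s y)) \<in> borel_measurable borel" and
    Gw_meas: "(\<lambda>(s, y). G (w s y)) \<in> borel_measurable borel"
    using Gu Gw unfolding measurable_linear_growth_def by blast
  note [measurable (raw)] = borel_measurable_uncurry_comp[OF Gu_meas] borel_measurable_uncurry_comp[OF Gw_meas]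
  have "u \<tau> x - w \<tau> x = (LINT s:{0..\<tau>}|lborel. ?D u s) - (LINT s:{0..\<tau>}|lborel. ?D w s)"
    using u(1) w(1) assms(8) unfolding mild_solution_def by auto
  also have "\<dots> = (LINT s:{0..\<tau>}|lborel. ?D u s - ?D w s)"
    using assms(7,8)
    by (intro set_integral_diff(2)[symmetric] set_integrable_duhamel_integrand[OF Gu]
        set_integrable_duhamel_integrand[OF Gw]) auto
  also have "\<dots> = (LINT s:{0..\<tau>}|lborel.
      exp (- (r + cM) * (\<tau> - s)) * heat_op \<sigma> \<rho> (\<tau> - s) (\<lambda>y. G (u s y) - G (w s y)) x)"
  proof (intro set_lebesgue_integral_cong allI impI)
    fix s assume "s \<in> {0..\<tau>}"
    then have "s \<in> {0..T}"
      using assms(8) by auto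
    have "heat_op \<sigma> \<rho> (\<tau> - s) (\<lambda>y. G (u s y) - G (w s y)) x
        = heat_op \<sigma> \<rho> (\<tau> - s) (\<lambda>y. G (u s y)) x - heat_op \<sigma> \<rho> (\<tau> - s) (\<lambda>y. G (w s y)) x"
      by (rule heat_op_diff[OF _ Ku[OF \<open>s \<in> {0..T}\<close>] _ Kw[OF \<open>s \<in> {0..T}\<close>]]) measurable
    then show "?D u s - ?D w s
        = exp (- (r + cM) * (\<tau> - s)) * heat_op \<sigma> \<rho> (\<tau> - s) (\<lambda>y. G (u s y) - G (w s y)) x"
      by (simp add: right_diff_distrib)
  qed simp
  finally show ?thesis .
qed

lemma mild_solution_diff_le_power_div_fact:
  assumes u: "mild_solution T r \<sigma> \<rho> cM G h u" "measurable_linear_growth T u"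
    and w: "mild_solution T r \<sigma> \<rho> cM G h w" "measurable_linear_growth T w"
    and G: "L-lipschitz_on UNIV G" "G \<in> borel_measurable borel" and "r + cM \<ge> 0"
    and M: "\<And>\<tau> x. \<tau> \<in> {0..T} \<Longrightarrow> \<bar>u \<tau> x - w \<tau> x\<bar> \<le> M * (1 + exp x)"
    and "\<tau> \<in> {0..T}"
  shows "\<bar>u \<tau> x - w \<tau> x\<bar>
    \<le> M * ((L * exp (\<bar>\<rho>\<bar> * T + \<sigma>^2 * T / 2) * \<tau>) ^ n / fact n) * (1 + exp x)"
  using assms(9)
proof (induction n arbitrary: \<tau> x)
  case 0
  then show ?case
    using M by simp
next
  case (Suc n)
  define C1 where "C1 = exp (\<bar>\<rho>\<bar> * T + \<sigma>^2 * T / 2)"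
  have "\<bar>G (u s y) - G (w s y)\<bar> \<le> L * M * ((L * C1 * s) ^ n / fact n) * (1 + exp y)"
    if "s \<in> {0..\<tau>}" for s y
  proof -
    have "\<bar>G (u s y) - G (w s y)\<bar> \<le> L * \<bar>u s y - w s y\<bar>"
      using lipschitz_onD[OF G(1)] by (simp add: dist_real_def)
    also have "\<dots> \<le> L * (M * ((L * C1 * s) ^ n / fact n) * (1 + exp y))"
      using Suc that lipschitz_on_nonneg[OF G(1)] by (intro mult_left_mono) (auto simp: C1_def)
    finally show ?thesis
      by (simp add: mult.assoc)
  qed
  then have "\<bar>u \<tau> x - w \<tau> x\<bar> \<le> (LINT s:{0..\<tau>}|lborel. L * M * ((L * C1 * s) ^ n / fact n)) * C1 * (1 + exp x)"
    unfolding mild_solution_diff[OF u w G assms(7) Suc.prems] C1_def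
    using Suc.prems assms(7) by (intro abs_duhamel_le) (auto intro!: continuous_intros)
  also have "\<dots> = L * M * ((L * C1) ^ n * \<tau> ^ Suc n / fact (Suc n)) * C1 * (1 + exp x)"
    using Suc.prems by (subst set_integral_mult_right, subst set_integral_power_div_fact) auto
  also have "\<dots> = M * ((L * C1 * \<tau>) ^ Suc n / fact (Suc n)) * (1 + exp x)"
    by (simp add: power_mult_distrib mult_ac)
  finally show ?case
    by (simp add: C1_def)
qed

lemma mild_solution_unique:
  assumes u: "mild_solution T r \<sigma> \<rho> cM G h u" "measurable_linear_growth T u"
    and w: "mild_solution T r \<sigma> \<rho> cM G h w" "measurable_linear_growth T w"
    and G: "L-lipschitz_on UNIV G" "G \<in> borel_measurable borel"
    and "r + cM \<ge> 0" "\<tau> \<in> {0..T}"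
  shows "u \<tau> x = w \<tau> x"
proof -
  obtain Cu Cw where
    Cu: "\<And>\<tau> x. \<tau> \<in> {0..T} \<Longrightarrow> \<bar>u \<tau> x\<bar> \<le> Cu * (1 + exp x)" and
    Cw: "\<And>\<tau> x. \<tau> \<in> {0..T} \<Longrightarrow> \<bar>w \<tau> x\<bar> \<le> Cw * (1 + exp x)"
    using u(2) w(2) unfolding measurable_linear_growth_def by blast
  have "\<bar>u \<tau> x - w \<tau> x\<bar> \<le> (Cu + Cw) * (1 + exp x)" if "\<tau> \<in> {0..T}" for \<tau> x
    using abs_triangle_ineq4[of "u \<tau> x" "w \<tau> x"] Cu[OF that, of x] Cw[OF that, of x]
    by (simp add: distrib_right)
  note picard = mild_solution_diff_le_power_div_fact[OF u w G assms(7) this assms(8)]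
  define K where "K = L * exp (\<bar>\<rho>\<bar> * T + \<sigma>^2 * T / 2) * \<tau>"
  have "(\<lambda>n. (Cu + Cw) * (K ^ n / fact n) * (1 + exp x)) \<longlonglongrightarrow> (Cu + Cw) * 0 * (1 + exp x)"
    using summable_LIMSEQ_zero[OF summable_exp[of K]]
    by (intro tendsto_intros) (simp add: divide_inverse mult.commute)
  then have "\<bar>u \<tau> x - w \<tau> x\<bar> \<le> 0"
    using picard by (intro LIMSEQ_le_const) (auto simp: K_def)
  then show ?thesis
    by simp
qed

lemma mild_solution_discounted_heat_op:
  assumes "\<sigma> > 0" and [measurable]: "h \<in> borel_measurable borel"
    and h: "\<And>y. h y \<ge> 0" "\<And>y. \<bar>h y\<bar> \<le> K * (1 + exp y)"
    and G: "\<And>v. v \<ge> 0 \<Longrightarrow> G v = (cM - k) * v"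
  shows "mild_solution T r \<sigma> \<rho> cM G h (\<lambda>\<tau> x. exp (- (r + k) * \<tau>) * heat_op \<sigma> \<rho> \<tau> h x)"
  unfolding mild_solution_def
proof (intro ballI allI)
  fix \<tau> x assume "\<tau> \<in> {0..T}"
  define P where "P = heat_op \<sigma> \<rho> \<tau> h x"
  define E where "E = exp (- (r + cM) * \<tau>)"
  have integrand: "exp (- (r + cM) * (\<tau> - s))
      * heat_op \<sigma> \<rho> (\<tau> - s) (\<lambda>y. G (exp (- (r + k) * s) * heat_op \<sigma> \<rho> s h y)) x
      = E * P * ((cM - k) * exp ((cM - k) * s))" if "s \<in> {0..\<tau>}" for s
  proof -
    have "heat_op \<sigma> \<rho> (\<tau> - s) (\<lambda>y. G (exp (- (r + k) * s) * heat_op \<sigma> \<rho> s h y)) x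
        = (cM - k) * exp (- (r + k) * s) * heat_op \<sigma> \<rho> (\<tau> - s) (heat_op \<sigma> \<rho> s h) x"
      using G h(1) by (simp add: heat_op_nonneg heat_op_cmult[symmetric] mult.assoc)
    also have "\<dots> = (cM - k) * exp (- (r + k) * s) * P"
      using heat_op_semigroup[OF assms(1) _ _ _ h, of "\<tau> - s" s] that by (simp add: P_def)
    finally have semigroup: "heat_op \<sigma> \<rho> (\<tau> - s) (\<lambda>y. G (exp (- (r + k) * s) * heat_op \<sigma> \<rho> s h y)) x
        = (cM - k) * exp (- (r + k) * s) * P" .
    have "exp (- (r + cM) * (\<tau> - s)) * exp (- (r + k) * s) = E * exp ((cM - k) * s)"
      unfolding E_def mult_exp_exp by (rule arg_cong[where f = exp]) (simp add: algebra_simps)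
    then show ?thesis
      unfolding semigroup by (metis mult.assoc mult.commute)
  qed
  have "(LINT s:{0..\<tau>}|lborel. exp (- (r + cM) * (\<tau> - s))
      * heat_op \<sigma> \<rho> (\<tau> - s) (\<lambda>y. G (exp (- (r + k) * s) * heat_op \<sigma> \<rho> s h y)) x)
      = (LINT s:{0..\<tau>}|lborel. E * P * ((cM - k) * exp ((cM - k) * s)))"
    using integrand by (intro set_lebesgue_integral_cong) auto
  also have "\<dots> = E * P * (exp ((cM - k) * \<tau>) - 1)"
    using \<open>\<tau> \<in> {0..T}\<close>
    by (subst set_integral_mult_right, subst set_integral_FTC_atLeastAtMost[where F = "\<lambda>s. exp ((cM - k) * s)"])
       (auto intro!: derivative_eq_intros continuous_intros)
  finally have duhamel: "(LINT s:{0..\<tau>}|lborel. exp (- (r + cM) * (\<tau> - s))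
      * heat_op \<sigma> \<rho> (\<tau> - s) (\<lambda>y. G (exp (- (r + k) * s) * heat_op \<sigma> \<rho> s h y)) x)
      = E * P * (exp ((cM - k) * \<tau>) - 1)" .
  have "exp (- (r + k) * \<tau>) = E * exp ((cM - k) * \<tau>)"
    unfolding E_def mult_exp_exp by (rule arg_cong[where f = exp]) (simp add: algebra_simps)
  then show "exp (- (r + k) * \<tau>) * heat_op \<sigma> \<rho> \<tau> h x
      = exp (- (r + cM) * \<tau>) * heat_op \<sigma> \<rho> \<tau> h x
        + (LINT s:{0..\<tau>}|lborel. exp (- (r + cM) * (\<tau> - s))
            * heat_op \<sigma> \<rho> (\<tau> - s) (\<lambda>y. G (exp (- (r + k) * s) * heat_op \<sigma> \<rho> s h y)) x)"
    unfolding duhamel P_def[symmetric] E_def[symmetric] by (simp add: algebra_simps)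
qed

lemma measurable_linear_growth_discounted_heat_op:
  assumes [measurable]: "h \<in> borel_measurable borel"
    and h: "\<And>y. \<bar>h y\<bar> \<le> K * (1 + exp y)" and "c \<ge> 0"
  shows "measurable_linear_growth T (\<lambda>\<tau> x. exp (- c * \<tau>) * heat_op \<sigma> \<rho> \<tau> h x)"
  unfolding measurable_linear_growth_def
proof
  show "(\<lambda>(\<tau>, x). exp (- c * \<tau>) * heat_op \<sigma> \<rho> \<tau> h x) \<in> borel_measurable borel"
  proof -
    have "(\<lambda>(\<tau>, x). exp (- c * \<tau>) * heat_op \<sigma> \<rho> \<tau> h x) \<in> borel_measurable (borel \<Otimes>\<^sub>M borel)"
      unfolding heat_op_normal_density by measurable
    then show ?thesis
      by (simp add: borel_prod)
  qed
  have "\<bar>exp (- c * \<tau>) * heat_op \<sigma> \<rho> \<tau> h x\<bar> \<le> K * exp (\<bar>\<rho>\<bar> * T + \<sigma>^2 * T / 2) * (1 + exp x)"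
    if "\<tau> \<in> {0..T}" for \<tau> x
    using abs_duhamel_integrand_le[OF assms(3) _ _ h, of 0 \<tau> T] that by simp
  then show "\<exists>C. \<forall>\<tau>\<in>{0..T}. \<forall>x. \<bar>exp (- c * \<tau>) * heat_op \<sigma> \<rho> \<tau> h x\<bar> \<le> C * (1 + exp x)"
    by blast
qed

lemma mild_solution_xva_g_eq_discounted_heat_op:
  assumes "r \<ge> 0" "\<sigma> > 0"
    and "0 \<le> (1 - RB) * lamB" "0 \<le> (1 - RC) * lamC + sF"
    and cM: "cM \<ge> max ((1 - RB) * lamB) ((1 - RC) * lamC + sF)"
    and [measurable]: "h \<in> borel_measurable borel"
    and h: "\<And>y. h y \<ge> 0" "\<And>y. \<bar>h y\<bar> \<le> K * (1 + exp y)"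
    and u: "mild_solution T r \<sigma> \<rho> cM (xva_g RB lamB RC lamC sF cM) h u" "measurable_linear_growth T u"
    and "\<tau> \<in> {0..T}"
  shows "u \<tau> x = exp (- (r + ((1 - RC) * lamC + sF)) * \<tau>) * heat_op \<sigma> \<rho> \<tau> h x"
proof (rule mild_solution_unique[OF u])
  show "mild_solution T r \<sigma> \<rho> cM (xva_g RB lamB RC lamC sF cM) h
      (\<lambda>\<tau> x. exp (- (r + ((1 - RC) * lamC + sF)) * \<tau>) * heat_op \<sigma> \<rho> \<tau> h x)"
    by (intro mild_solution_discounted_heat_op[OF assms(2,6) h]) (simp add: xva_g_nonneg)
  show "measurable_linear_growth T (\<lambda>\<tau> x. exp (- (r + ((1 - RC) * lamC + sF)) * \<tau>) * heat_op \<sigma> \<rho> \<tau> h x)"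
    using assms(1,4) by (intro measurable_linear_growth_discounted_heat_op[OF assms(6) h(2)]) simp
  show "cM-lipschitz_on UNIV (xva_g RB lamB RC lamC sF cM)"
    using assms(3,4) cM by (intro xva_g_lipschitz) auto
  show "xva_g RB lamB RC lamC sF cM \<in> borel_measurable borel"
    unfolding xva_g_def by measurable
  show "r + cM \<ge> 0"
    using assms(1,4) cM by linarith
qed fact

lemma bs_price_eq_heat_op:
  assumes "S > 0"
  shows "bs_price T r \<sigma> qS \<gamma>S H t S
    = exp (- r * (T - t)) * heat_op \<sigma> (qS - \<gamma>S - \<sigma>^2/2) (T - t) (\<lambda>x. H (exp x)) (ln S)"
  using assms by (simp add: bs_price_def heat_op_def exp_add mult.assoc)

theorem mainTheorem2:
  fixes T r \<sigma> qS \<gamma>S lamB lamC RB RC sF cM :: real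
    and H :: "real \<Rightarrow> real"
    and u :: "real \<Rightarrow> real \<Rightarrow> real"
  assumes "T > 0" and "r > 0" and "\<sigma> > 0"
    and "lamB \<ge> 0" and "lamC \<ge> 0"
    and "RB \<in> {0..1}" and "RC \<in> {0..1}" and "sF \<ge> 0"
    and H_nonneg: "\<forall>S>0. H S \<ge> 0"
    and H_meas: "(\<lambda>x. H (exp x)) \<in> borel_measurable borel"
    and H_growth: "\<exists>C. \<forall>S>0. H S \<le> C * (1 + S)"
    and cM: "cM \<ge> max ((1 - RB) * lamB) ((1 - RC) * lamC + sF)"
    and u_meas: "(\<lambda>(s, y). u s y) \<in> borel_measurable borel"
    and u_growth: "\<exists>C. \<forall>\<tau>\<in>{0..T}. \<forall>x. \<bar>u \<tau> x\<bar> \<le> C * (1 + exp x)"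
    and u_sol: "mild_solution T r \<sigma> (qS - \<gamma>S - \<sigma>^2/2) cM
                  (xva_g RB lamB RC lamC sF cM) (\<lambda>x. H (exp x)) u"
  shows "\<forall>t\<in>{0..T}. \<forall>S>0.
           u (T - t) (ln S) \<ge> 0 \<and>
           u (T - t) (ln S) = exp (- ((1 - RC) * lamC + sF) * (T - t)) * bs_price T r \<sigma> qS \<gamma>S H t S"
proof (intro ballI allI impI)
  fix t S :: real assume "t \<in> {0..T}" "S > 0"
  obtain C where "\<forall>S>0. H S \<le> C * (1 + S)"
    using H_growth by blast
  then have "\<And>x. \<bar>H (exp x)\<bar> \<le> C * (1 + exp x)"
    using H_nonneg by simp
  moreover have "measurable_linear_growth T u"
    using u_meas u_growth unfolding measurable_linear_growth_def by blast
  ultimately have "u (T - t) (ln S)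
      = exp (- (r + ((1 - RC) * lamC + sF)) * (T - t)) * heat_op \<sigma> (qS - \<gamma>S - \<sigma>^2/2) (T - t) (\<lambda>x. H (exp x)) (ln S)"
    using assms(2-8) H_nonneg \<open>t \<in> {0..T}\<close>
    by (intro mild_solution_xva_g_eq_discounted_heat_op[OF _ _ _ _ cM H_meas _ _ u_sol]) auto
  moreover have "exp (- (r + ((1 - RC) * lamC + sF)) * (T - t))
      = exp (- ((1 - RC) * lamC + sF) * (T - t)) * exp (- r * (T - t))"
    unfolding mult_exp_exp by (rule arg_cong[where f = exp]) (simp add: algebra_simps)
  ultimately show "u (T - t) (ln S) \<ge> 0 \<and>
      u (T - t) (ln S) = exp (- ((1 - RC) * lamC + sF) * (T - t)) * bs_price T r \<sigma> qS \<gamma>S H t S"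
    using H_nonneg by (simp add: bs_price_eq_heat_op[OF \<open>S > 0\<close>] heat_op_nonneg mult.assoc)
qed

end
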